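(* Fix $s>2$ and $\mu^*>0$. Then for every $\mu_1>\mu^*$ there exist $\delta>0$ and a relatively open neighborhood $U\subset\mathcal{C}_{[\mu^*,\mu_1]}$ of $(\Delta\times[\mu^*,\mu_1])\cap\mathcal{C}_{[\mu^*,\mu_1]}$ such that $d\theta(f_{s,\mu}(\mathbf{x}))\ge\delta$ for all $(\mathbf{x},\mu)\in U\setminus(\Delta\times[\mu^*,\mu_1])$.
   Context: $f_{s,\mu}$ is the repressilator vector field $\dot x=\frac{\mu}{1+y^s}-x$, $\dot y=\frac{\mu}{1+z^s}-y$, $\dot z=\frac{\mu}{1+x^s}-z$ on $\mathbb{R}^3_+$. For $\mu\ge0$, $K_\mu:=\{(x,y,z)\colon\frac{\mu}{2+\mu^s}\le x,y,z\le\mu\}$; $\mathcal{C}:=\{(\mathbf{x},\mu)\in\mathbb{R}^3\times\mathbb{R}\colon\mu\ge0,\ \mathbf{x}\in K_\mu\}$ and $\mathcal{C}_J:=\mathcal{C}\cap(\mathbb{R}^3\times J)$. $\Delta:=\mathrm{span}\{(1,1,1)\}$; $\|\mathbf{x}_\perp\|^2=\tfrac23(x^2+y^2+z^2-xy-yz-zx)$ is the squared distance to $\Delta$; $d\theta:=\frac{1}{\sqrt3}\frac{(z-y)dx+(x-z)dy+(y-x)dz}{\|\mathbf{x}_\perp\|^2}$ on $\mathbb{R}^3\setminus\Delta$. *)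

theory Defs
  imports "HOL-Analysis.Analysis"
begin

type_synonym pt = "real \<times> real \<times> real"

definition repr_field :: "real \<Rightarrow> real \<Rightarrow> pt \<Rightarrow> pt" where
  "repr_field s \<mu> p = (case p of (x, y, z) \<Rightarrow>
     (\<mu> / (1 + y powr s) - x, \<mu> / (1 + z powr s) - y, \<mu> / (1 + x powr s) - z))"

definition Kset :: "real \<Rightarrow> real \<Rightarrow> pt set" where
  "Kset s \<mu> = {(x, y, z). \<mu> / (2 + \<mu> powr s) \<le> x \<and> x \<le> \<mu> \<and>
                           \<mu> / (2 + \<mu> powr s) \<le> y \<and> y \<le> \<mu> \<and>
                           \<mu> / (2 + \<mu> powr s) \<le> z \<and> z \<le> \<mu>}"

definition Cset :: "real \<Rightarrow> (pt \<times> real) set" where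
  "Cset s = {(p, \<mu>). \<mu> \<ge> 0 \<and> p \<in> Kset s \<mu>}"

definition CsetJ :: "real \<Rightarrow> real set \<Rightarrow> (pt \<times> real) set" where
  "CsetJ s J = Cset s \<inter> (UNIV \<times> J)"

definition diag :: "pt set" where
  "diag = {(x, y, z). x = y \<and> y = z}"

text \<open>Squared distance to the diagonal.\<close>
definition perp_sq :: "pt \<Rightarrow> real" where
  "perp_sq p = (case p of (x, y, z) \<Rightarrow> 2/3 * (x^2 + y^2 + z^2 - x*y - y*z - z*x))"

definition dtheta :: "pt \<Rightarrow> pt \<Rightarrow> real" where
  "dtheta p v = (case p of (x, y, z) \<Rightarrow> case v of (a, b, c) \<Rightarrow>
     (1 / sqrt 3) * ((z - y) * a + (x - z) * b + (y - x) * c) / perp_sq p)"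

end

theory Submission imports Defs begin

text \<open>Up to the positive factor \<open>\<mu> / (sqrt 3 * perp_sq p)\<close>, the angular speed of the
repressilator is the cyclic sum \<open>(z - y) g y + (x - z) g z + (y - x) g x\<close> of the Hill function
\<open>g t = 1 / (1 + t powr s)\<close>. Splitting this sum with the mean value theorem, its main part is
\<open>-\<Sum>(x - y)(g x - g y) / 2\<close>, which is at least \<open>L\<close> times the squared distance to the
diagonal if \<open>g' \<le> -L\<close>; the remainder is controlled by the oscillation of \<open>g'\<close>, which is
at most \<open>L\<close> near the diagonal by uniform continuity. On \<open>\<mu> \<in> [\<mu>*, \<mu>1]\<close> all points of
\<open>K\<^sub>\<mu>\<close> lie in one compact interval \<open>[a, b]\<close> with \<open>a > 0\<close>, where such an \<open>L\<close> exists.\<close>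

definition cyclic_sum :: "(real \<Rightarrow> real) \<Rightarrow> pt \<Rightarrow> real" where
  "cyclic_sum g p = (case p of (x, y, z) \<Rightarrow> (z - y) * g y + (x - z) * g z + (y - x) * g x)"

definition near_diag :: "real \<Rightarrow> pt set" where
  "near_diag r = {(x, y, z). \<bar>x - y\<bar> < r \<and> \<bar>y - z\<bar> < r \<and> \<bar>z - x\<bar> < r}"

definition hill :: "real \<Rightarrow> real \<Rightarrow> real" where
  "hill s t = 1 / (1 + t powr s)"

definition hill_deriv :: "real \<Rightarrow> real \<Rightarrow> real" where
  "hill_deriv s t = - (s * t powr (s - 1)) / (1 + t powr s)^2"

lemma perp_sq_eq: "perp_sq (x, y, z) = ((x - y)^2 + (y - z)^2 + (z - x)^2) / 3"
  by (simp add: perp_sq_def power2_diff field_simps)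

lemma perp_sq_pos: "p \<notin> diag \<Longrightarrow> perp_sq p > 0"
  by (cases p) (auto simp: perp_sq_eq diag_def add_pos_nonneg add_nonneg_pos)

lemma abs_mult_diff_le_perp_sq:
  "\<bar>(z - x) * (y - x)\<bar> \<le> 3 / 2 * perp_sq (x, y, z)"
proof -
  have "2 * \<bar>(z - x) * (y - x)\<bar> \<le> (z - x)^2 + (y - x)^2"
    using sum_squares_bound[of "\<bar>z - x\<bar>" "\<bar>y - x\<bar>"] by (simp add: abs_mult)
  moreover have "(y - x)^2 = (x - y)^2" by (rule power2_commute)
  ultimately show ?thesis
    unfolding perp_sq_eq using zero_le_power2[of "y - z"] by argo
qed

lemma open_near_diag: "open (near_diag r)"
proof -
  have "near_diag r = {p. \<bar>fst p - fst (snd p)\<bar> < r \<and> \<bar>fst (snd p) - snd (snd p)\<bar> < r \<and>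
                           \<bar>snd (snd p) - fst p\<bar> < r}"
    by (auto simp: near_diag_def)
  then show ?thesis
    by (simp only:) (intro open_Collect_conj open_Collect_less continuous_intros)
qed

lemma diag_subset_near_diag: "r > 0 \<Longrightarrow> diag \<subseteq> near_diag r"
  by (auto simp: diag_def near_diag_def)

lemma real_mvt_between:
  fixes g g' :: "real \<Rightarrow> real"
  assumes deriv: "\<And>t. t \<in> {a..b} \<Longrightarrow> (g has_real_derivative g' t) (at t)"
    and "t \<in> {a..b}" "u \<in> {a..b}"
  obtains \<xi> where "min t u \<le> \<xi>" "\<xi> \<le> max t u" "g t - g u = (t - u) * g' \<xi>"
proof -
  have "\<exists>\<xi>. v \<le> \<xi> \<and> \<xi> \<le> w \<and> g w - g v = (w - v) * g' \<xi>"
    if "v \<le> w" "v \<in> {a..b}" "w \<in> {a..b}" for v w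
  proof (cases "v = w")
    case False
    with that have "v < w" by simp
    with MVT2[of v w g g'] deriv that show ?thesis
      by (metis atLeastAtMost_iff less_eq_real_def order_trans)
  qed auto
  from this[of t u] this[of u t] assms(2,3) that show ?thesis
    by (cases "t \<le> u") (auto simp: algebra_simps)
qed

lemma cyclic_sum_split:
  "cyclic_sum g (x, y, z) =
     - ((x - y) * (g x - g y) + (y - z) * (g y - g z) + (z - x) * (g z - g x)) / 2
     + ((z - x) * (g y - g x) - (y - x) * (g z - g x)) / 2"
  by (simp add: cyclic_sum_def field_simps)

lemma cyclic_sum_ge_perp_sq:
  fixes g g' :: "real \<Rightarrow> real"
  assumes deriv: "\<And>t. t \<in> {a..b} \<Longrightarrow> (g has_real_derivative g' t) (at t)"
    and slope: "\<And>t. t \<in> {a..b} \<Longrightarrow> g' t \<le> - L"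
    and osc: "\<And>t u. t \<in> {a..b} \<Longrightarrow> u \<in> {a..b} \<Longrightarrow> \<bar>t - u\<bar> < 2 * r \<Longrightarrow> \<bar>g' t - g' u\<bar> \<le> L"
    and xyz: "x \<in> {a..b}" "y \<in> {a..b}" "z \<in> {a..b}"
    and near: "(x, y, z) \<in> near_diag r"
  shows "cyclic_sum g (x, y, z) \<ge> 3 / 4 * L * perp_sq (x, y, z)"
proof -
  obtain \<xi>1 where \<xi>1: "min y x \<le> \<xi>1" "\<xi>1 \<le> max y x" "g y - g x = (y - x) * g' \<xi>1"
    using real_mvt_between[OF deriv xyz(2,1)] .
  obtain \<xi>2 where \<xi>2: "min z x \<le> \<xi>2" "\<xi>2 \<le> max z x" "g z - g x = (z - x) * g' \<xi>2"
    using real_mvt_between[OF deriv xyz(3,1)] .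
  obtain \<xi>3 where \<xi>3: "min y z \<le> \<xi>3" "\<xi>3 \<le> max y z" "g y - g z = (y - z) * g' \<xi>3"
    using real_mvt_between[OF deriv xyz(2,3)] .
  have "\<xi>1 \<in> {a..b}" "\<xi>2 \<in> {a..b}" "\<xi>3 \<in> {a..b}"
    using \<xi>1 \<xi>2 \<xi>3 xyz by auto
  then have slopes: "g' \<xi>1 \<le> - L" "g' \<xi>2 \<le> - L" "g' \<xi>3 \<le> - L"
    using slope by auto
  have "\<bar>\<xi>1 - \<xi>2\<bar> < 2 * r"
    using \<xi>1 \<xi>2 near by (auto simp: near_diag_def abs_if min_def max_def split: if_splits)
  then have osc12: "\<bar>g' \<xi>1 - g' \<xi>2\<bar> \<le> L"
    using osc \<open>\<xi>1 \<in> {a..b}\<close> \<open>\<xi>2 \<in> {a..b}\<close> by blast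
  have "g x - g y = (x - y) * g' \<xi>1"
    using \<xi>1(3) by (simp add: algebra_simps)
  then have "- ((x - y) * (g x - g y) + (y - z) * (g y - g z) + (z - x) * (g z - g x))
      = (x - y)^2 * (- g' \<xi>1) + (y - z)^2 * (- g' \<xi>3) + (z - x)^2 * (- g' \<xi>2)"
    unfolding \<xi>2(3) \<xi>3(3) by (simp add: power2_eq_square)
  also have "\<dots> \<ge> ((x - y)^2 + (y - z)^2 + (z - x)^2) * L"
    unfolding distrib_right using slopes by (intro add_mono mult_left_mono) auto
  finally have main_ge: "- ((x - y) * (g x - g y) + (y - z) * (g y - g z) + (z - x) * (g z - g x))
      \<ge> 3 * L * perp_sq (x, y, z)"
    by (simp add: perp_sq_eq mult.commute)
  have "(z - x) * (g y - g x) - (y - x) * (g z - g x) = (z - x) * (y - x) * (g' \<xi>1 - g' \<xi>2)"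
    unfolding \<xi>1(3) \<xi>2(3) by (simp add: algebra_simps)
  also have "\<bar>\<dots>\<bar> \<le> \<bar>(z - x) * (y - x)\<bar> * L"
    using osc12 by (simp add: abs_mult mult_left_mono)
  also have "\<dots> \<le> 3 / 2 * perp_sq (x, y, z) * L"
    using abs_mult_diff_le_perp_sq osc12 by (intro mult_right_mono) auto
  also have "\<dots> = 3 / 2 * L * perp_sq (x, y, z)"
    by simp
  finally have "\<bar>(z - x) * (g y - g x) - (y - x) * (g z - g x)\<bar> \<le> 3 / 2 * L * perp_sq (x, y, z)" .
  moreover have "\<And>S R c :: real. 3 * c \<le> S \<Longrightarrow> \<bar>R\<bar> \<le> 3 / 2 * c \<Longrightarrow> 3 / 4 * c \<le> S / 2 + R / 2"
    by (simp add: abs_le_iff)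
  ultimately show ?thesis
    using main_ge unfolding cyclic_sum_split mult.assoc by blast
qed

lemma one_plus_powr_neq_zero [simp]: "1 + (t::real) powr s \<noteq> 0"
  by (metis powr_ge_zero add_pos_nonneg zero_less_one less_irrefl)

lemma has_real_derivative_hill: "t > 0 \<Longrightarrow> (hill s has_real_derivative hill_deriv s t) (at t)"
  unfolding hill_def[abs_def] hill_deriv_def
  by (auto intro!: derivative_eq_intros simp: power2_eq_square)

lemma continuous_on_hill_deriv: "a > 0 \<Longrightarrow> continuous_on {a..b} (hill_deriv s)"
  unfolding hill_deriv_def[abs_def]
  by (intro continuous_intros) auto

lemma hill_deriv_neg: "t > 0 \<Longrightarrow> s > 0 \<Longrightarrow> hill_deriv s t < 0"
  unfolding hill_deriv_def by (auto intro!: divide_pos_pos simp: add_pos_nonneg)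

lemma hill_deriv_slope_and_oscillation:
  assumes "0 < a" "a \<le> b" "s > 0"
  obtains L r where "L > 0" "r > 0" "\<And>t. t \<in> {a..b} \<Longrightarrow> hill_deriv s t \<le> - L"
    "\<And>t u. t \<in> {a..b} \<Longrightarrow> u \<in> {a..b} \<Longrightarrow> \<bar>t - u\<bar> < 2 * r \<Longrightarrow>
       \<bar>hill_deriv s t - hill_deriv s u\<bar> \<le> L"
proof -
  have cont: "continuous_on {a..b} (hill_deriv s)"
    using continuous_on_hill_deriv[OF assms(1)] .
  obtain t0 where t0: "t0 \<in> {a..b}" "\<And>t. t \<in> {a..b} \<Longrightarrow> hill_deriv s t \<le> hill_deriv s t0"
    using continuous_attains_sup[OF compact_Icc _ cont] assms(2) by auto
  define L where "L = - hill_deriv s t0"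
  have "L > 0"
    using hill_deriv_neg[of t0 s] t0(1) assms by (simp add: L_def)
  moreover obtain d where "d > 0"
    "\<And>t u. t \<in> {a..b} \<Longrightarrow> u \<in> {a..b} \<Longrightarrow> dist u t < d \<Longrightarrow>
       dist (hill_deriv s u) (hill_deriv s t) < L"
    using compact_uniformly_continuous[OF cont compact_Icc] \<open>L > 0\<close>
    unfolding uniformly_continuous_on_def by metis
  ultimately show ?thesis
    using that[of L "d / 2"] t0(2) by (force simp: L_def dist_real_def abs_minus_commute)
qed

lemma dtheta_repr_field:
  "dtheta p (repr_field s \<mu> p) = \<mu> * cyclic_sum (hill s) p / (sqrt 3 * perp_sq p)"
proof (cases p)
  case (fields x y z)
  have "(z - y) * (\<mu> / (1 + y powr s) - x) + (x - z) * (\<mu> / (1 + z powr s) - y)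
      + (y - x) * (\<mu> / (1 + x powr s) - z) = \<mu> * cyclic_sum (hill s) p"
    by (simp add: fields cyclic_sum_def hill_def algebra_simps)
  then show ?thesis
    by (simp add: fields dtheta_def repr_field_def)
qed

lemma Kset_subset_cube:
  assumes "0 < \<mu>s" "\<mu>s \<le> \<mu>" "\<mu> \<le> \<mu>1" "s > 0"
  defines "a \<equiv> \<mu>s / (2 + \<mu>1 powr s)"
  shows "Kset s \<mu> \<subseteq> {a..\<mu>1} \<times> {a..\<mu>1} \<times> {a..\<mu>1}"
proof -
  have "a \<le> \<mu> / (2 + \<mu> powr s)"
    unfolding a_def using assms by (intro frac_le) (auto intro!: powr_mono2 add_pos_nonneg)
  then show ?thesis
    using assms(3) by (auto simp: Kset_def)
qed

lemma dtheta_repr_field_ge_near_diag: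
  assumes "s > 0" "0 < \<mu>s" "\<mu>s < \<mu>1"
  obtains \<delta> r where "\<delta> > 0" "r > 0"
    "\<And>p \<mu>. \<mu> \<in> {\<mu>s..\<mu>1} \<Longrightarrow> p \<in> Kset s \<mu> \<Longrightarrow> p \<in> near_diag r \<Longrightarrow> p \<notin> diag \<Longrightarrow>
       dtheta p (repr_field s \<mu> p) \<ge> \<delta>"
proof -
  define a where "a = \<mu>s / (2 + \<mu>1 powr s)"
  have "0 < a"
    using assms by (simp add: a_def add_pos_nonneg)
  have "a \<le> \<mu>s / 1"
    unfolding a_def using assms by (intro divide_left_mono) (auto simp: add_pos_nonneg)
  then have "a \<le> \<mu>1"
    using assms(3) by simp
  then obtain L r where L: "L > 0" "r > 0"
    "\<And>t. t \<in> {a..\<mu>1} \<Longrightarrow> hill_deriv s t \<le> - L"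
    "\<And>t u. t \<in> {a..\<mu>1} \<Longrightarrow> u \<in> {a..\<mu>1} \<Longrightarrow> \<bar>t - u\<bar> < 2 * r \<Longrightarrow>
       \<bar>hill_deriv s t - hill_deriv s u\<bar> \<le> L"
    using hill_deriv_slope_and_oscillation[OF \<open>0 < a\<close> _ assms(1)] by blast
  have "\<mu>s * (3 / 4 * L) / sqrt 3 \<le> dtheta p (repr_field s \<mu> p)"
    if \<mu>: "\<mu> \<in> {\<mu>s..\<mu>1}" and p: "p \<in> Kset s \<mu>" "p \<in> near_diag r" "p \<notin> diag" for p \<mu>
  proof -
    obtain x y z where xyz: "p = (x, y, z)"
      by (cases p)
    have "p \<in> {a..\<mu>1} \<times> {a..\<mu>1} \<times> {a..\<mu>1}"
      using Kset_subset_cube[of \<mu>s \<mu> \<mu>1 s] assms(1,2) \<mu> p(1) unfolding a_def by auto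
    then have "x \<in> {a..\<mu>1}" "y \<in> {a..\<mu>1}" "z \<in> {a..\<mu>1}"
      by (simp_all add: xyz)
    then have bound: "cyclic_sum (hill s) p \<ge> 3 / 4 * L * perp_sq p"
      using cyclic_sum_ge_perp_sq[OF has_real_derivative_hill L(3,4)] p(2) \<open>0 < a\<close>
      by (force simp: xyz)
    have "\<mu>s * (3 / 4 * L * perp_sq p) \<le> \<mu> * (3 / 4 * L * perp_sq p)"
      using \<mu> L(1) perp_sq_pos[OF p(3)] by (intro mult_right_mono) auto
    also have "\<dots> \<le> \<mu> * cyclic_sum (hill s) p"
      using bound \<mu> assms(2) by (intro mult_left_mono) auto
    finally show ?thesis
      using perp_sq_pos[OF p(3)] by (simp add: dtheta_repr_field field_simps)
  qed
  moreover have "\<mu>s * (3 / 4 * L) / sqrt 3 > 0"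
    using assms L(1) by simp
  ultimately show ?thesis
    using that L(2) by blast
qed

theorem lemma8:
  fixes s \<mu>s :: real
  assumes "s > 2" and "\<mu>s > 0"
  shows "\<forall>\<mu>1 > \<mu>s. \<exists>\<delta> > 0. \<exists>U.
           openin (top_of_set (CsetJ s {\<mu>s..\<mu>1})) U \<and>
           (diag \<times> {\<mu>s..\<mu>1}) \<inter> CsetJ s {\<mu>s..\<mu>1} \<subseteq> U \<and>
           (\<forall>p \<mu>. (p, \<mu>) \<in> U - diag \<times> {\<mu>s..\<mu>1} \<longrightarrow>
                    dtheta p (repr_field s \<mu> p) \<ge> \<delta>)"
proof (intro allI impI)
  fix \<mu>1 assume "\<mu>1 > \<mu>s"
  obtain \<delta> r where "\<delta> > 0" "r > 0" and \<delta>: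
    "\<And>p \<mu>. \<mu> \<in> {\<mu>s..\<mu>1} \<Longrightarrow> p \<in> Kset s \<mu> \<Longrightarrow> p \<in> near_diag r \<Longrightarrow> p \<notin> diag \<Longrightarrow>
       dtheta p (repr_field s \<mu> p) \<ge> \<delta>"
    using dtheta_repr_field_ge_near_diag[of s \<mu>s \<mu>1] assms \<open>\<mu>1 > \<mu>s\<close> by auto
  define U where "U = CsetJ s {\<mu>s..\<mu>1} \<inter> near_diag r \<times> UNIV"
  have "openin (top_of_set (CsetJ s {\<mu>s..\<mu>1})) U"
    unfolding U_def by (intro openin_open_Int open_Times open_near_diag open_UNIV)
  moreover have "(diag \<times> {\<mu>s..\<mu>1}) \<inter> CsetJ s {\<mu>s..\<mu>1} \<subseteq> U"
    using diag_subset_near_diag[OF \<open>r > 0\<close>] by (auto simp: U_def)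
  moreover have "dtheta p (repr_field s \<mu> p) \<ge> \<delta>" if "(p, \<mu>) \<in> U - diag \<times> {\<mu>s..\<mu>1}" for p \<mu>
    using that by (auto simp: U_def CsetJ_def Cset_def intro!: \<delta>)
  ultimately show "\<exists>\<delta> > 0. \<exists>U. openin (top_of_set (CsetJ s {\<mu>s..\<mu>1})) U \<and>
           (diag \<times> {\<mu>s..\<mu>1}) \<inter> CsetJ s {\<mu>s..\<mu>1} \<subseteq> U \<and>
           (\<forall>p \<mu>. (p, \<mu>) \<in> U - diag \<times> {\<mu>s..\<mu>1} \<longrightarrow> dtheta p (repr_field s \<mu> p) \<ge> \<delta>)"
    using \<open>\<delta> > 0\<close> by blast
qed

end
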